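(* Let $\Sigma\in\mathbb{R}^{p\times p}$ be a covariance matrix, $\sigma>0$, and for $\beta\in\mathbb{R}^p$ let $P_\beta$ be the law of $(X,y)\in\mathbb{R}^p\times\mathbb{R}$ with $X\sim N(0,\Sigma)$ and $y\mid X\sim N(\beta^TX,\sigma^2)$. For $\mathcal{U}\subset\mathbb{R}^p\setminus\{0\}$ let $\mathcal{D}_{\mathcal{U}}(\alpha,\mathbb{P})=\inf_{u\in\mathcal{U}}\mathbb{P}\{u^TX(y-X^T\alpha)\ge0\}$. There is a universal constant $C>0$ such that for any $\alpha\in\mathbb{R}^p$ with $\alpha-\beta\in\mathcal{U}$, if $\mathcal{D}_{\mathcal{U}}(\alpha,P_\beta)\ge\frac12-\eta$ for some $\eta<\frac5{12}$, then $\|\Sigma^{1/2}(\alpha-\beta)\|\le C\sigma\eta$. *)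

theory Defs
  imports "HOL-Probability.Probability"
begin

text \<open>Vectors of R^p are represented as functions nat => real that vanish
  at indices >= p; p x p matrices as functions nat => nat => real (only indices < p matter).\<close>

definition rvec :: "nat \<Rightarrow> (nat \<Rightarrow> real) set" where
  "rvec p = {v. \<forall>i\<ge>p. v i = 0}"

definition dotp :: "nat \<Rightarrow> (nat \<Rightarrow> real) \<Rightarrow> (nat \<Rightarrow> real) \<Rightarrow> real" where
  "dotp p u v = (\<Sum>i<p. u i * v i)"

definition quad_form :: "nat \<Rightarrow> (nat \<Rightarrow> nat \<Rightarrow> real) \<Rightarrow> (nat \<Rightarrow> real) \<Rightarrow> real" where
  "quad_form p S v = (\<Sum>i<p. \<Sum>j<p. v i * S i j * v j)"

definition covariance_matrix :: "nat \<Rightarrow> (nat \<Rightarrow> nat \<Rightarrow> real) \<Rightarrow> bool" where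
  "covariance_matrix p S \<longleftrightarrow> (\<forall>i<p. \<forall>j<p. S i j = S j i) \<and> (\<forall>v. 0 \<le> quad_form p S v)"

definition rvec_space :: "nat \<Rightarrow> (nat \<Rightarrow> real) measure" where
  "rvec_space p = PiM {..<p} (\<lambda>_. lborel)"

definition normal_law :: "real \<Rightarrow> real \<Rightarrow> real measure" where
  "normal_law m s2 = (if 0 < s2 then density lborel (normal_density m (sqrt s2)) else return lborel m)"

text \<open>M is the law N(0,S) on R^p: every linear functional v^T X is N(0, v^T S v).\<close>
definition centered_gaussian :: "nat \<Rightarrow> (nat \<Rightarrow> nat \<Rightarrow> real) \<Rightarrow> (nat \<Rightarrow> real) measure \<Rightarrow> bool" where
  "centered_gaussian p S M \<longleftrightarrow> sets M = sets (rvec_space p) \<and> prob_space M \<and>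
     (\<forall>v. distr M lborel (\<lambda>x. dotp p v x) = normal_law 0 (quad_form p S v))"

text \<open>Law P_beta of (X, y) where X ~ M and y = beta^T X + eps, eps ~ N(0, sigma^2) independent of X,
  i.e. y | X ~ N(beta^T X, sigma^2).\<close>
definition regression_law :: "nat \<Rightarrow> real \<Rightarrow> (nat \<Rightarrow> real) \<Rightarrow> (nat \<Rightarrow> real) measure
    \<Rightarrow> ((nat \<Rightarrow> real) \<times> real) measure" where
  "regression_law p \<sigma> \<beta> M =
     distr (M \<Otimes>\<^sub>M normal_law 0 (\<sigma>\<^sup>2)) (rvec_space p \<Otimes>\<^sub>M lborel)
       (\<lambda>(x, e). (x, dotp p \<beta> x + e))"

definition depth :: "nat \<Rightarrow> (nat \<Rightarrow> real) set \<Rightarrow> (nat \<Rightarrow> real) \<Rightarrow> ((nat \<Rightarrow> real) \<times> real) measure \<Rightarrow> real" where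
  "depth p U \<alpha> P = (INF u\<in>U. measure P {z \<in> space P. 0 \<le> dotp p u (fst z) * (snd z - dotp p (fst z) \<alpha>)})"

end

theory Submission imports Defs begin

text \<open>Put \<open>v = \<alpha> - \<beta>\<close>, \<open>W = v\<^sup>T X \<sim> N(0, t\<^sup>2)\<close> with \<open>t = \<parallel>\<Sigma>\<^sup>1\<^sup>/\<^sup>2 v\<parallel>\<close>, and let \<open>\<epsilon> \<sim> N(0, \<sigma>\<^sup>2)\<close>
  be the independent noise, so that \<open>y - X\<^sup>T\<alpha> = \<epsilon> - W\<close>. The depth of \<open>\<alpha>\<close> is at most the
  probability of \<open>W (\<epsilon> - W) \<ge> 0\<close>. This event is disjoint from the events where \<open>W\<close> and \<open>\<epsilon>\<close>
  have opposite signs (total mass \<open>1/2\<close>) and from \<open>{W > s, 0 \<le> \<epsilon> < s}\<close> and its mirror image,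
  so \<open>2 P(W > s) P(0 \<le> \<epsilon> < s) \<le> \<eta>\<close> for every \<open>s > 0\<close>. Elementary bounds on the Gaussian
  density, at \<open>s = min t \<sigma>\<close> and at \<open>s = 4\<sigma>\<close>, turn this into \<open>t \<le> 10800 \<sigma> \<eta>\<close>.\<close>

abbreviation centered_normal :: "real \<Rightarrow> real measure" where
  "centered_normal s \<equiv> density lborel (normal_density 0 s)"

lemma normal_density_centered:
  "0 < s \<Longrightarrow> normal_density 0 s x = exp (- x\<^sup>2 / (2 * s\<^sup>2)) / (sqrt (2 * pi) * s)"
  unfolding normal_density_def by (simp add: real_sqrt_mult)

lemma normal_density_centered_antimono:
  assumes "0 < s" "\<bar>x\<bar> \<le> \<bar>y\<bar>"
  shows "normal_density 0 s y \<le> normal_density 0 s x"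
proof -
  have "x\<^sup>2 \<le> y\<^sup>2" using assms(2) by (metis abs_le_square_iff)
  then have "- y\<^sup>2 / (2 * s\<^sup>2) \<le> - x\<^sup>2 / (2 * s\<^sup>2)" using assms(1) by (simp add: divide_right_mono)
  then show ?thesis using assms(1) by (simp add: normal_density_centered divide_right_mono)
qed

lemma measure_centered_normal_eq_emeasure:
  "0 < s \<Longrightarrow> emeasure (centered_normal s) A = ennreal (measure (centered_normal s) A)"
  using finite_measure.emeasure_eq_measure[OF prob_space.finite_measure[OF prob_space_normal_density]]
  by blast

lemma measure_centered_normal_uminus_vimage:
  assumes A: "A \<in> sets borel"
  shows "measure (centered_normal s) (uminus -` A) = measure (centered_normal s) A"
proof -
  have "emeasure (centered_normal s) A
      = (\<integral>\<^sup>+x. ennreal (normal_density 0 s x) * indicator A x \<partial>lborel)"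
    using A by (simp add: emeasure_density)
  also have "\<dots> = \<bar>-1::real\<bar> *
      (\<integral>\<^sup>+x. ennreal (normal_density 0 s (0 + -1 * x)) * indicator A (0 + -1 * x) \<partial>lborel)"
    by (rule nn_integral_real_affine) (use A in auto)
  also have "\<dots> = (\<integral>\<^sup>+x. ennreal (normal_density 0 s x) * indicator (uminus -` A) x \<partial>lborel)"
    by (simp add: normal_density_def indicator_def)
  also have "\<dots> = emeasure (centered_normal s) (uminus -` A)"
    using measurable_sets[OF borel_measurable_uminus[OF measurable_ident] A]
    by (simp add: emeasure_density)
  finally show ?thesis by (simp add: measure_def)
qed

lemma measure_centered_normal_singleton: "measure (centered_normal s) {x} = 0"
  by (simp add: measure_def emeasure_density nn_integral_null_set)

lemma measure_centered_normal_half: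
  assumes "0 < s"
  shows "measure (centered_normal s) {0<..} = 1/2"
    and "measure (centered_normal s) {..<0} = 1/2"
proof -
  interpret prob_space "centered_normal s" by (rule prob_space_normal_density[OF assms])
  have sym: "measure (centered_normal s) {..<0} = measure (centered_normal s) {0<..}"
    using measure_centered_normal_uminus_vimage[of "{0<..}" s] by (simp add: vimage_def lessThan_def)
  have split: "UNIV = ({..<0} \<union> {0}) \<union> ({0<..} :: real set)" by auto
  have "1 = measure (centered_normal s) UNIV" using prob_space by simp
  also have "\<dots> = measure (centered_normal s) ({..<0} \<union> {0}) + measure (centered_normal s) {0<..}"
    by (subst split, rule finite_measure_Union) auto
  also have "measure (centered_normal s) ({..<0} \<union> {0}) = measure (centered_normal s) {..<0}"
    using finite_measure_Union[of "{..<0}" "{0}"] measure_centered_normal_singleton by simp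
  finally show "measure (centered_normal s) {0<..} = 1/2" "measure (centered_normal s) {..<0} = 1/2"
    using sym by auto
qed

lemma measure_centered_normal_interval_ge:
  assumes "0 < s" "0 \<le> a" "a \<le> b"
  shows "(b - a) * normal_density 0 s b \<le> measure (centered_normal s) {a<..<b}"
proof -
  have "ennreal ((b - a) * normal_density 0 s b)
      = (\<integral>\<^sup>+x. ennreal (normal_density 0 s b) * indicator {a<..<b} x \<partial>lborel)"
    using assms by (simp add: nn_integral_cmult ennreal_mult' mult.commute)
  also have "\<dots> \<le> (\<integral>\<^sup>+x. ennreal (normal_density 0 s x) * indicator {a<..<b} x \<partial>lborel)"
    using assms by (intro nn_integral_mono) (auto simp: indicator_def intro!: normal_density_centered_antimono)
  also have "\<dots> = emeasure (centered_normal s) {a<..<b}"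
    by (simp add: emeasure_density)
  finally show ?thesis using assms by (simp add: measure_centered_normal_eq_emeasure ennreal_le_iff)
qed

lemma measure_centered_normal_interval_le:
  assumes "0 < s" "0 \<le> b"
  shows "measure (centered_normal s) {0<..b} \<le> b * normal_density 0 s 0"
proof -
  have "emeasure (centered_normal s) {0<..b}
      = (\<integral>\<^sup>+x. ennreal (normal_density 0 s x) * indicator {0<..b} x \<partial>lborel)"
    by (simp add: emeasure_density)
  also have "\<dots> \<le> (\<integral>\<^sup>+x. ennreal (normal_density 0 s 0) * indicator {0<..b} x \<partial>lborel)"
    using assms by (intro nn_integral_mono) (auto simp: indicator_def intro!: normal_density_centered_antimono)
  also have "\<dots> = ennreal (b * normal_density 0 s 0)"
    using assms by (simp add: nn_integral_cmult ennreal_mult' mult.commute)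
  finally show ?thesis using assms by (simp add: measure_centered_normal_eq_emeasure ennreal_le_iff)
qed

lemma measure_centered_normal_tail_le:
  assumes "0 < s" "0 < b"
  shows "measure (centered_normal s) {b..} \<le> s\<^sup>2 / b\<^sup>2"
proof -
  have "has_bochner_integral lborel (\<lambda>x. normal_density 0 s x * (x - 0) ^ (2 * 1))
      (fact (2 * 1) / ((2 / s\<^sup>2)^1 * fact 1))"
    by (rule normal_moment_even) (rule assms(1))
  then have moment: "has_bochner_integral lborel (\<lambda>x. normal_density 0 s x * x\<^sup>2) (s\<^sup>2)"
    using assms by (simp add: power2_eq_square)
  have pointwise: "ennreal (normal_density 0 s x) * indicator {b..} x
      \<le> ennreal (1 / b\<^sup>2) * ennreal (normal_density 0 s x * x\<^sup>2)" for x
  proof (cases "b \<le> x")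
    case True
    then have "1 \<le> x\<^sup>2 / b\<^sup>2" using assms by (simp add: power_mono)
    then have "normal_density 0 s x \<le> 1 / b\<^sup>2 * (normal_density 0 s x * x\<^sup>2)"
      using mult_left_mono[of 1 "x\<^sup>2 / b\<^sup>2" "normal_density 0 s x"] by simp
    then show ?thesis using True by (simp add: ennreal_mult'[symmetric] ennreal_leI)
  qed simp
  have "emeasure (centered_normal s) {b..}
      = (\<integral>\<^sup>+x. ennreal (normal_density 0 s x) * indicator {b..} x \<partial>lborel)"
    by (simp add: emeasure_density)
  also have "\<dots> \<le> (\<integral>\<^sup>+x. ennreal (1 / b\<^sup>2) * ennreal (normal_density 0 s x * x\<^sup>2) \<partial>lborel)"
    by (rule nn_integral_mono[OF pointwise])
  also have "\<dots> = ennreal (1 / b\<^sup>2) * (\<integral>\<^sup>+x. ennreal (normal_density 0 s x * x\<^sup>2) \<partial>lborel)"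
    by (simp add: nn_integral_cmult)
  also have "(\<integral>\<^sup>+x. ennreal (normal_density 0 s x * x\<^sup>2) \<partial>lborel) = ennreal (s\<^sup>2)"
    using moment unfolding has_bochner_integral_iff by (subst nn_integral_eq_integral) auto
  finally show ?thesis
    using assms by (simp add: measure_centered_normal_eq_emeasure ennreal_mult'[symmetric] ennreal_le_iff)
qed

lemma measure_centered_normal_greaterThan_ge:
  assumes "0 < s" "b \<le> s"
  shows "exp (-2) / sqrt (2 * pi) \<le> measure (centered_normal s) {b<..}"
proof -
  interpret prob_space "centered_normal s" by (rule prob_space_normal_density[OF assms(1)])
  have "exp (-2) / sqrt (2 * pi) = (2 * s - s) * normal_density 0 s (2 * s)"
    using assms by (simp add: normal_density_centered power2_eq_square)
  also have "\<dots> \<le> measure (centered_normal s) {s<..<2 * s}"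
    using assms by (intro measure_centered_normal_interval_ge) auto
  also have "\<dots> \<le> measure (centered_normal s) {b<..}"
    using assms by (intro finite_measure_mono) auto
  finally show ?thesis .
qed

lemma measure_centered_normal_atLeastLessThan_ge:
  assumes "0 < s" "0 < b" "b \<le> s"
  shows "b * exp (-1/2) / (sqrt (2 * pi) * s) \<le> measure (centered_normal s) {0..<b}"
proof -
  interpret prob_space "centered_normal s" by (rule prob_space_normal_density[OF assms(1)])
  have "b * exp (-1/2) / (sqrt (2 * pi) * s) = b * normal_density 0 s s"
    using assms by (simp add: normal_density_centered power2_eq_square)
  also have "\<dots> \<le> (b - 0) * normal_density 0 s b"
    using assms by (auto intro!: mult_left_mono normal_density_centered_antimono)
  also have "\<dots> \<le> measure (centered_normal s) {0<..<b}"
    using assms by (intro measure_centered_normal_interval_ge) auto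
  also have "\<dots> \<le> measure (centered_normal s) {0..<b}"
    using assms by (intro finite_measure_mono) auto
  finally show ?thesis .
qed

lemma measure_centered_normal_greaterThan_ge_half:
  assumes "0 < s" "0 < b"
  shows "1/2 - b / (sqrt (2 * pi) * s) \<le> measure (centered_normal s) {b<..}"
proof -
  interpret prob_space "centered_normal s" by (rule prob_space_normal_density[OF assms(1)])
  have split: "{0<..} = {0<..b} \<union> {b<..}" using assms by auto
  have "measure (centered_normal s) {0<..}
      = measure (centered_normal s) {0<..b} + measure (centered_normal s) {b<..}"
    by (subst split, rule finite_measure_Union) auto
  moreover have "measure (centered_normal s) {0<..b} \<le> b / (sqrt (2 * pi) * s)"
    using measure_centered_normal_interval_le[of s b] assms by (simp add: normal_density_centered)
  ultimately show ?thesis using measure_centered_normal_half(1)[OF assms(1)] by simp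
qed

lemma measure_centered_normal_atLeastLessThan_ge_half:
  assumes "0 < s" "0 < b"
  shows "1/2 - s\<^sup>2 / b\<^sup>2 \<le> measure (centered_normal s) {0..<b}"
proof -
  interpret prob_space "centered_normal s" by (rule prob_space_normal_density[OF assms(1)])
  have split: "{0..} = {0..<b} \<union> {b..}" using assms by auto
  have "measure (centered_normal s) {0..}
      = measure (centered_normal s) {0..<b} + measure (centered_normal s) {b..}"
    by (subst split, rule finite_measure_Union) auto
  moreover have "measure (centered_normal s) {0<..} \<le> measure (centered_normal s) {0..}"
    by (intro finite_measure_mono) auto
  ultimately show ?thesis
    using measure_centered_normal_tail_le[OF assms] measure_centered_normal_half(1)[OF assms(1)] by simp
qed

lemma exp_minus_five_halves_ge: "1/27 \<le> exp (-5/2::real)"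
proof -
  have "exp (5/2::real) \<le> exp 1 ^ 3"
    by (simp add: exp_of_nat_mult[symmetric])
  also have "\<dots> \<le> 3 ^ 3" by (rule power_mono[OF exp_le]) simp
  finally show ?thesis by (simp add: exp_minus field_simps)
qed

lemma normal_tail_product_ge_ratio:
  assumes "0 < s" "s \<le> t" "s \<le> \<sigma>"
  shows "s / (108 * \<sigma>) \<le> 2 * measure (centered_normal t) {s<..} * measure (centered_normal \<sigma>) {0..<s}"
proof -
  have "s / (108 * \<sigma>) \<le> exp (-5/2) / pi * (s / \<sigma>)"
    using exp_minus_five_halves_ge pi_less_4 pi_gt_zero assms by (simp add: field_simps)
  also have "\<dots> = 2 * (exp (-2) / sqrt (2 * pi)) * (s * exp (-1/2) / (sqrt (2 * pi) * \<sigma>))"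
    using assms by (simp add: field_simps flip: exp_add)
  also have "\<dots> \<le> 2 * measure (centered_normal t) {s<..} * measure (centered_normal \<sigma>) {0..<s}"
    using assms
    by (intro mult_mono mult_left_mono measure_centered_normal_greaterThan_ge
        measure_centered_normal_atLeastLessThan_ge) auto
  finally show ?thesis .
qed

lemma normal_tail_product_ge_large_scale:
  assumes "0 < \<sigma>" "100 * \<sigma> < t"
  shows "21/50 \<le> 2 * measure (centered_normal t) {4 * \<sigma><..} * measure (centered_normal \<sigma>) {0..<4 * \<sigma>}"
proof -
  have "4 * \<sigma> / (sqrt (2 * pi) * t) \<le> 4 * \<sigma> / (2 * t)"
    using pi_ge_two assms by (intro divide_left_mono) (auto simp: real_le_rsqrt)
  also have "\<dots> \<le> 2/100" using assms by (simp add: field_simps)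
  finally have "48/100 \<le> measure (centered_normal t) {4 * \<sigma><..}"
    using measure_centered_normal_greaterThan_ge_half[of t "4 * \<sigma>"] assms by linarith
  moreover have "7/16 \<le> measure (centered_normal \<sigma>) {0..<4 * \<sigma>}"
    using measure_centered_normal_atLeastLessThan_ge_half[of \<sigma> "4 * \<sigma>"] assms
    by (simp add: power2_eq_square)
  ultimately have "48/100 * (7/16) \<le> measure (centered_normal t) {4 * \<sigma><..} * measure (centered_normal \<sigma>) {0..<4 * \<sigma>}"
    by (intro mult_mono) auto
  then show ?thesis by simp
qed

lemma scale_le_of_normal_tail_product_le:
  assumes "0 < t" "0 < \<sigma>" "\<eta> < 5/12"
    and gap: "\<And>s. 0 < s \<Longrightarrow> 2 * measure (centered_normal t) {s<..} * measure (centered_normal \<sigma>) {0..<s} \<le> \<eta>"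
  shows "t \<le> 10800 * \<sigma> * \<eta>"
proof -
  have bounded: "t \<le> 100 * \<sigma>"
    using normal_tail_product_ge_large_scale[of \<sigma> t] gap[of "4 * \<sigma>"] assms by fastforce
  have ratio: "min t \<sigma> / (108 * \<sigma>) \<le> \<eta>"
    using normal_tail_product_ge_ratio[of "min t \<sigma>" t \<sigma>] gap[of "min t \<sigma>"] assms
    by (smt (verit) min_def)
  show ?thesis
  proof (cases "t \<le> \<sigma>")
    case True
    then show ?thesis using ratio assms by (simp add: field_simps)
  next
    case False
    then have "100 * \<sigma> * 1 \<le> 100 * \<sigma> * (108 * \<eta>)"
      using ratio assms by (intro mult_left_mono) (auto simp: field_simps)
    then show ?thesis using bounded by (simp add: algebra_simps)
  qed
qed

lemma sign_agreement_cases: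
  "0 \<le> (w::real) * (e - w) \<Longrightarrow> (0 < w \<longrightarrow> w \<le> e) \<and> (w < 0 \<longrightarrow> e \<le> w)"
  by (smt (verit) mult_less_0_iff)

lemma measure_pair_measure_Times:
  assumes "prob_space M" "prob_space N" "A \<in> sets M" "B \<in> sets N"
  shows "measure (M \<Otimes>\<^sub>M N) (A \<times> B) = measure M A * measure N B"
proof -
  interpret N: prob_space N by fact
  have "emeasure (M \<Otimes>\<^sub>M N) (A \<times> B) = emeasure M A * emeasure N B"
    using assms by (intro N.emeasure_pair_measure_Times) auto
  then show ?thesis unfolding measure_def by (simp add: enn2real_mult)
qed

text \<open>On the event \<open>g (e - g) \<ge> 0\<close> the value \<open>e\<close> lies beyond \<open>g\<close> on the same side of \<open>0\<close>, so
  the event is disjoint from each of the four rectangles.\<close>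

lemma measure_sign_agreement_plus_rectangles_le:
  fixes g :: "'a \<Rightarrow> real"
  assumes M: "prob_space M" and N: "prob_space N" and sN: "sets N = sets borel"
    and g: "g \<in> borel_measurable M" and "0 < s"
  shows "measure (M \<Otimes>\<^sub>M N) {z \<in> space (M \<Otimes>\<^sub>M N). 0 \<le> g (fst z) * (snd z - g (fst z))}
     + measure (distr M lborel g) {0<..} * measure N {..<0}
     + measure (distr M lborel g) {..<0} * measure N {0<..}
     + measure (distr M lborel g) {s<..} * measure N {0..<s}
     + measure (distr M lborel g) {..<-s} * measure N {-s<..0} \<le> 1"
proof -
  interpret P: prob_space "M \<Otimes>\<^sub>M N" using M N by (rule prob_space_pair)
  define G where "G B = g -` B \<inter> space M" for B
  have G: "G B \<in> sets M" if "B \<in> sets borel" for B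
    unfolding G_def using measurable_sets[OF g that] .
  have rect: "P.prob (G B \<times> C) = measure (distr M lborel g) B * measure N C"
    if "B \<in> sets borel" "C \<in> sets borel" for B C
    using measure_pair_measure_Times[OF M N G[OF that(1)]] measure_distr[of g M lborel B] g that sN
    by (simp add: G_def)
  define T where "T = {z \<in> space (M \<Otimes>\<^sub>M N). 0 \<le> g (fst z) * (snd z - g (fst z))}"
  define R1 where "R1 = G {0<..} \<times> ({..<0}::real set)"
  define R2 where "R2 = G {..<0} \<times> ({0<..}::real set)"
  define R3 where "R3 = G {s<..} \<times> {0..<s}"
  define R4 where "R4 = G {..<-s} \<times> {-s<..0}"
  have "snd \<in> borel_measurable (M \<Otimes>\<^sub>M N)"
    using measurable_snd measurable_cong_sets[OF refl sN] by blast
  then have "(\<lambda>z. g (fst z) * (snd z - g (fst z))) \<in> borel_measurable (M \<Otimes>\<^sub>M N)"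
    using g by measurable
  then have "T \<in> sets (M \<Otimes>\<^sub>M N)"
    unfolding T_def by measurable
  moreover have "R1 \<in> sets (M \<Otimes>\<^sub>M N)" "R2 \<in> sets (M \<Otimes>\<^sub>M N)" "R3 \<in> sets (M \<Otimes>\<^sub>M N)" "R4 \<in> sets (M \<Otimes>\<^sub>M N)"
    unfolding R1_def R2_def R3_def R4_def by (intro pair_measureI G; simp add: sN)+
  moreover have "R3 \<inter> R4 = {}" "R2 \<inter> (R3 \<union> R4) = {}" "R1 \<inter> (R2 \<union> (R3 \<union> R4)) = {}"
    unfolding R1_def R2_def R3_def R4_def G_def using \<open>0 < s\<close> by auto
  moreover have "T \<inter> (R1 \<union> (R2 \<union> (R3 \<union> R4))) = {}"
    unfolding T_def R1_def R2_def R3_def R4_def G_def using \<open>0 < s\<close>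
    by (auto dest!: sign_agreement_cases)
  ultimately have "P.prob T + (P.prob R1 + (P.prob R2 + (P.prob R3 + P.prob R4)))
      = P.prob (T \<union> (R1 \<union> (R2 \<union> (R3 \<union> R4))))"
    by (simp add: P.finite_measure_Union)
  also have "\<dots> \<le> 1" by (rule P.prob_le_1)
  finally show ?thesis
    unfolding T_def R1_def R2_def R3_def R4_def by (simp add: rect)
qed

lemma measure_sign_agreement_centered_normal_le:
  fixes g :: "'a \<Rightarrow> real"
  assumes "prob_space M" "g \<in> borel_measurable M" "distr M lborel g = centered_normal t"
    and "0 < t" "0 < \<sigma>" "0 < s"
  shows "measure (M \<Otimes>\<^sub>M centered_normal \<sigma>)
      {z \<in> space (M \<Otimes>\<^sub>M centered_normal \<sigma>). 0 \<le> g (fst z) * (snd z - g (fst z))}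
    \<le> 1/2 - 2 * measure (centered_normal t) {s<..} * measure (centered_normal \<sigma>) {0..<s}"
proof -
  have "uminus -` {s<..} = {..<-s}" "uminus -` {0..<s} = {-s<..0}" by auto
  then have "measure (centered_normal t) {..<-s} = measure (centered_normal t) {s<..}"
    and "measure (centered_normal \<sigma>) {-s<..0} = measure (centered_normal \<sigma>) {0..<s}"
    using measure_centered_normal_uminus_vimage[of "{s<..}" t]
      measure_centered_normal_uminus_vimage[of "{0..<s}" \<sigma>] by simp_all
  then show ?thesis
    using measure_sign_agreement_plus_rectangles_le
        [OF assms(1) prob_space_normal_density[where \<mu>=0, OF assms(5)] _ assms(2,6)]
      measure_centered_normal_half assms(3-5)
    by simp
qed

lemma measurable_dotp[measurable]: "dotp p v \<in> borel_measurable (rvec_space p)"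
  unfolding dotp_def rvec_space_def by measurable

lemma dotp_commute: "dotp p u v = dotp p v u"
  unfolding dotp_def by (simp add: mult.commute)

lemma sets_normal_law[simp]: "sets (normal_law m s2) = sets borel"
  by (simp add: normal_law_def)

lemma normal_law_centered: "0 < s \<Longrightarrow> normal_law 0 (s\<^sup>2) = centered_normal s"
  by (simp add: normal_law_def)

lemma depth_le_measure:
  assumes "u \<in> U"
  shows "depth p U \<alpha> P \<le> measure P {z \<in> space P. 0 \<le> dotp p u (fst z) * (snd z - dotp p (fst z) \<alpha>)}"
  unfolding depth_def by (rule cINF_lower) (auto intro: bdd_belowI[of _ 0] simp: assms)

text \<open>Under \<open>P\<^sub>\<beta>\<close> the residual of \<open>\<alpha>\<close> is \<open>y - X\<^sup>T\<alpha> = \<epsilon> - (\<alpha> - \<beta>)\<^sup>T X\<close>.\<close>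

lemma measure_regression_law_sign_event:
  assumes sM: "sets M = sets (rvec_space p)"
  shows "measure (regression_law p \<sigma> \<beta> M)
      {z \<in> space (regression_law p \<sigma> \<beta> M). 0 \<le> dotp p (\<alpha> - \<beta>) (fst z) * (snd z - dotp p (fst z) \<alpha>)}
    = measure (M \<Otimes>\<^sub>M normal_law 0 (\<sigma>\<^sup>2))
      {z \<in> space (M \<Otimes>\<^sub>M normal_law 0 (\<sigma>\<^sup>2)).
        0 \<le> dotp p (\<alpha> - \<beta>) (fst z) * (snd z - dotp p (\<alpha> - \<beta>) (fst z))}"
    (is "measure ?P ?S = measure ?Q ?T")
proof -
  let ?R = "rvec_space p \<Otimes>\<^sub>M lborel"
  define f where "f = (\<lambda>(x, e). (x, dotp p \<beta> x + e))"
  have sQ: "sets ?Q = sets ?R"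
    using sM by (intro sets_pair_measure_cong) auto
  have f: "f \<in> measurable ?Q ?R"
    unfolding measurable_cong_sets[OF sQ refl] f_def by measurable
  have P: "?P = distr ?Q ?R f"
    unfolding regression_law_def f_def ..
  have "?S \<in> sets ?R"
    unfolding P space_distr sets_distr dotp_commute[of p _ \<alpha>] by measurable
  moreover have "f -` ?S \<inter> space ?Q = ?T"
    using measurable_space[OF f] unfolding P f_def
    by (auto simp: dotp_def sum_subtractf algebra_simps mult.commute)
  ultimately show ?thesis
    unfolding P using measure_distr[OF f] by simp
qed

theorem lemma4:
  shows "\<exists>C::real. C > 0 \<and>
    (\<forall>(p::nat) (S::nat \<Rightarrow> nat \<Rightarrow> real) (\<sigma>::real) (\<beta>::nat \<Rightarrow> real) (\<alpha>::nat \<Rightarrow> real)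
       (U::(nat \<Rightarrow> real) set) (\<eta>::real) (M::(nat \<Rightarrow> real) measure).
      covariance_matrix p S \<longrightarrow> 0 < \<sigma> \<longrightarrow> centered_gaussian p S M \<longrightarrow>
      \<beta> \<in> rvec p \<longrightarrow> \<alpha> \<in> rvec p \<longrightarrow> U \<subseteq> rvec p - {\<lambda>_. 0} \<longrightarrow> \<alpha> - \<beta> \<in> U \<longrightarrow>
      0 \<le> \<eta> \<longrightarrow> \<eta> < 5/12 \<longrightarrow>
      depth p U \<alpha> (regression_law p \<sigma> \<beta> M) \<ge> 1/2 - \<eta> \<longrightarrow>
      sqrt (quad_form p S (\<alpha> - \<beta>)) \<le> C * \<sigma> * \<eta>)"
proof (intro exI[of _ 10800] conjI allI impI)
  show "(0::real) < 10800" by simp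
  fix p S \<sigma> \<beta> \<alpha> U \<eta> M
  assume "covariance_matrix p S" "0 < \<sigma>" "centered_gaussian p S M" "\<alpha> - \<beta> \<in> U"
    "0 \<le> \<eta>" "\<eta> < 5/12" "depth p U \<alpha> (regression_law p \<sigma> \<beta> M) \<ge> 1/2 - \<eta>"
  define t where "t = sqrt (quad_form p S (\<alpha> - \<beta>))"
  have "0 \<le> quad_form p S (\<alpha> - \<beta>)"
    using \<open>covariance_matrix p S\<close> by (simp add: covariance_matrix_def)
  have sM: "sets M = sets (rvec_space p)" and "prob_space M"
    and law: "distr M lborel (dotp p (\<alpha> - \<beta>)) = normal_law 0 (t\<^sup>2)"
    using \<open>centered_gaussian p S M\<close> \<open>0 \<le> quad_form p S (\<alpha> - \<beta>)\<close>
    by (auto simp: centered_gaussian_def t_def)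
  show "t \<le> 10800 * \<sigma> * \<eta>"
  proof (cases "t = 0")
    case False
    then have "0 < t" using \<open>0 \<le> quad_form p S (\<alpha> - \<beta>)\<close> by (simp add: t_def)
    have g: "dotp p (\<alpha> - \<beta>) \<in> borel_measurable M"
      using measurable_dotp measurable_cong_sets[OF sM refl] by blast
    have W: "distr M lborel (dotp p (\<alpha> - \<beta>)) = centered_normal t"
      using law normal_law_centered[OF \<open>0 < t\<close>] by simp
    have agreement: "1/2 - \<eta> \<le> measure (M \<Otimes>\<^sub>M centered_normal \<sigma>)
        {z \<in> space (M \<Otimes>\<^sub>M centered_normal \<sigma>).
          0 \<le> dotp p (\<alpha> - \<beta>) (fst z) * (snd z - dotp p (\<alpha> - \<beta>) (fst z))}"
      using depth_le_measure[OF \<open>\<alpha> - \<beta> \<in> U\<close>, of p \<alpha> "regression_law p \<sigma> \<beta> M"]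
        measure_regression_law_sign_event[OF sM, of \<sigma> \<beta> \<alpha>] \<open>depth p U \<alpha> _ \<ge> 1/2 - \<eta>\<close>
      by (simp add: normal_law_centered[OF \<open>0 < \<sigma>\<close>])
    have "2 * measure (centered_normal t) {s<..} * measure (centered_normal \<sigma>) {0..<s} \<le> \<eta>"
      if "0 < s" for s
      using measure_sign_agreement_centered_normal_le[OF \<open>prob_space M\<close> g W \<open>0 < t\<close> \<open>0 < \<sigma>\<close> that]
        agreement by linarith
    then show ?thesis
      using scale_le_of_normal_tail_product_le \<open>0 < t\<close> \<open>0 < \<sigma>\<close> \<open>\<eta> < 5/12\<close> by blast
  qed (use \<open>0 < \<sigma>\<close> \<open>0 \<le> \<eta>\<close> in simp)
qed

end
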